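(* The set $\mathcal{P}^{(+)}$ is path-connected.
   Context: Consider the continuous-time LTI system $\dot x = Ax + B_u u + B_d d$, $y = Cx + Dd$, with $x\in\mathbb{R}^n$, $u\in\mathbb{R}^m$, $d,y\in\mathbb{R}^p$ and real matrices of compatible dimensions. For $K\in\mathbb{R}^{m\times n}$ write $A_K = A-B_uK$. For a symmetric $P\in\mathbb{R}^{n\times n}$ let $$M_K(P)=\begin{bmatrix} A_K^\top P + PA_K & PB_d - C^\top\\ B_d^\top P - C & -D-D^\top\end{bmatrix}.$$ The condition $L_{\mathrm{s}}(D,K)$ (resp. $L_{\mathrm{ns}}(D,K)$) on $P$ means: if $D=0$, $A_K^\top P + PA_K\prec 0$ (resp. $\preceq 0$) and $B_d^\top P = C$; if $D\neq 0$, $M_K(P)\prec 0$ (resp. $\preceq 0$). The passivity region is $\mathcal{P}=\{K\in\mathbb{R}^{m\times n}:\exists P\succ 0 \text{ with } L_{\mathrm{ns}}(D,K)\}$ and the strict passivity region is $\mathcal{P}^+=\{K\in\mathbb{R}^{m\times n}:\exists P\succ 0\text{ with } L_{\mathrm{s}}(D,K)\}$. The notation $\mathcal{P}^{(+)}$ stands for either $\mathcal{P}$ or $\mathcal{P}^+$; the statement holds in both cases. (Standing assumption in the paper: $\mathcal{P}^{(+)}\neq\emptyset$.) *)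

theory Defs
  imports "HOL-Analysis.Analysis"
begin

text \<open>Matrices are rendered as nested Cartesian vectors: a k-by-l real matrix is
  real^'l^'k (rows indexed by 'k). Dimensions n, m, p are the finite index types
  'n, 'm, 'p.\<close>

definition pos_def :: "real^'k^'k \<Rightarrow> bool" where
  "pos_def M \<longleftrightarrow> transpose M = M \<and> (\<forall>x. x \<noteq> 0 \<longrightarrow> x \<bullet> (M *v x) > 0)"

definition neg_def :: "real^'k^'k \<Rightarrow> bool" where
  "neg_def M \<longleftrightarrow> transpose M = M \<and> (\<forall>x. x \<noteq> 0 \<longrightarrow> x \<bullet> (M *v x) < 0)"

definition neg_semidef :: "real^'k^'k \<Rightarrow> bool" where
  "neg_semidef M \<longleftrightarrow> transpose M = M \<and> (\<forall>x. x \<bullet> (M *v x) \<le> 0)"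

definition AK :: "real^'n^'n \<Rightarrow> real^'m^'n \<Rightarrow> real^'n^'m \<Rightarrow> real^'n^'n" where
  "AK A Bu K = A - Bu ** K"

definition MK :: "real^'n^'n \<Rightarrow> real^'m^'n \<Rightarrow> real^'p^'n \<Rightarrow> real^'n^'p \<Rightarrow> real^'p^'p
    \<Rightarrow> real^'n^'m \<Rightarrow> real^'n^'n \<Rightarrow> real^('n + 'p)^('n + 'p)" where
  "MK A Bu Bd C D K P = (\<chi> i j.
     (case i of
        Inl a \<Rightarrow> (case j of
                    Inl b \<Rightarrow> (transpose (AK A Bu K) ** P + P ** AK A Bu K) $ a $ b
                  | Inr b \<Rightarrow> (P ** Bd - transpose C) $ a $ b)
      | Inr a \<Rightarrow> (case j of
                    Inl b \<Rightarrow> (transpose Bd ** P - C) $ a $ b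
                  | Inr b \<Rightarrow> (- D - transpose D) $ a $ b)))"

definition L_s where
  "L_s A Bu Bd C D K P \<longleftrightarrow>
     (if D = 0 then neg_def (transpose (AK A Bu K) ** P + P ** AK A Bu K) \<and> transpose Bd ** P = C
      else neg_def (MK A Bu Bd C D K P))"

definition L_ns where
  "L_ns A Bu Bd C D K P \<longleftrightarrow>
     (if D = 0 then neg_semidef (transpose (AK A Bu K) ** P + P ** AK A Bu K) \<and> transpose Bd ** P = C
      else neg_semidef (MK A Bu Bd C D K P))"

definition passivity_region ::
  "real^'n^'n \<Rightarrow> real^'m^'n \<Rightarrow> real^'p^'n \<Rightarrow> real^'n^'p \<Rightarrow> real^'p^'p \<Rightarrow> (real^'n^'m) set" where
  "passivity_region A Bu Bd C D = {K. \<exists>P. pos_def P \<and> L_ns A Bu Bd C D K P}"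

definition strict_passivity_region ::
  "real^'n^'n \<Rightarrow> real^'m^'n \<Rightarrow> real^'p^'n \<Rightarrow> real^'n^'p \<Rightarrow> real^'p^'p \<Rightarrow> (real^'n^'m) set" where
  "strict_passivity_region A Bu Bd C D = {K. \<exists>P. pos_def P \<and> L_s A Bu Bd C D K P}"

end

(* The substitution Q = P^-1, L = K Q (a congruence by diag(P^-1, I)) turns the passivity
   inequalities, bilinear in (P, K), into conditions jointly affine in (Q, L).  The feasible pairs
   (Q, L) with Q positive definite therefore form a convex set, and the (strict) passivity region
   is its image under the map (Q, L) |-> L Q^-1, which is continuous since matrix inversion is. *)

theory Submission
  imports Defs
begin

lemma matrix_inv_inverse:
  fixes A :: "'a::semiring_1^'n^'m"
  assumes "invertible A"
  shows "A ** matrix_inv A = mat 1" and "matrix_inv A ** A = mat 1"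
  using someI_ex[OF assms[unfolded invertible_def]] unfolding matrix_inv_def by auto

lemma matrix_inv_unique:
  fixes A :: "'a::semiring_1^'n^'m"
  assumes "A ** B = mat 1" and "B ** A = mat 1"
  shows "matrix_inv A = B"
proof -
  have "invertible A" using assms unfolding invertible_def by blast
  have "matrix_inv A = matrix_inv A ** (A ** B)"
    by (simp add: assms(1))
  also have "\<dots> = (matrix_inv A ** A) ** B"
    by (simp add: matrix_mul_assoc)
  also have "\<dots> = B"
    by (simp add: matrix_inv_inverse(2) \<open>invertible A\<close>)
  finally show ?thesis .
qed

lemma matrix_inv_matrix_inv:
  fixes A :: "'a::semiring_1^'n^'m"
  assumes "invertible A"
  shows "matrix_inv (matrix_inv A) = A"
  by (rule matrix_inv_unique) (simp_all add: matrix_inv_inverse assms)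

lemma matrix_inv_component:
  fixes Q :: "real^'n::finite^'n"
  assumes "invertible Q"
  shows "matrix_inv Q $ k $ j = det (\<chi> a b. if b = k then axis j 1 $ a else Q $ a $ b) / det Q"
proof -
  have "Q *v (matrix_inv Q *v axis j 1) = axis j 1"
    by (simp add: matrix_vector_mul_assoc matrix_inv_inverse assms)
  then have "matrix_inv Q *v axis j 1 = (\<chi> k. det (\<chi> a b. if b = k then axis j 1 $ a else Q $ a $ b) / det Q)"
    using cramer assms invertible_det_nz by blast
  moreover have "(matrix_inv Q *v axis j 1) $ k = matrix_inv Q $ k $ j"
    by (simp add: matrix_vector_mult_def axis_def if_distrib cong: if_cong)
  ultimately show ?thesis by simp
qed

lemma continuous_on_det [continuous_intros]:
  fixes f :: "'a::topological_space \<Rightarrow> real^'n::finite^'n"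
  shows "continuous_on S f \<Longrightarrow> continuous_on S (\<lambda>x. det (f x))"
  unfolding det_def by (intro continuous_intros)

lemma continuous_on_matrix_mult [continuous_intros]:
  fixes f :: "'a::topological_space \<Rightarrow> real^'n::finite^'m::finite"
    and g :: "'a \<Rightarrow> real^'k::finite^'n"
  shows "continuous_on S f \<Longrightarrow> continuous_on S g \<Longrightarrow> continuous_on S (\<lambda>x. f x ** g x)"
  unfolding matrix_matrix_mult_def by (intro continuous_intros)

lemma continuous_on_matrix_inv [continuous_intros]:
  fixes f :: "'a::topological_space \<Rightarrow> real^'n::finite^'n"
  assumes f: "continuous_on S f" and inv: "\<And>x. x \<in> S \<Longrightarrow> invertible (f x)"
  shows "continuous_on S (\<lambda>x. matrix_inv (f x))"
proof -
  have dets: "continuous_on S (\<lambda>x. det (\<chi> a b. if b = k then axis j 1 $ a else f x $ a $ b))" for j k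
  proof (intro continuous_on_det continuous_on_vec_lambda)
    fix a b show "continuous_on S (\<lambda>x. if b = k then axis j 1 $ a else f x $ a $ b)"
      by (cases "b = k") (simp_all add: continuous_intros f)
  qed
  have "continuous_on S (\<lambda>x. \<chi> k j.
      det (\<chi> a b. if b = k then axis j 1 $ a else f x $ a $ b) / det (f x))"
    using inv invertible_det_nz
    by (intro continuous_on_vec_lambda continuous_on_divide dets continuous_on_det f) auto
  then show ?thesis
    by (rule continuous_on_cong[THEN iffD1, rotated 2])
      (simp_all add: vec_eq_iff matrix_inv_component inv)
qed

lemma transpose_add: "transpose (A + B) = transpose A + transpose (B :: 'a::ab_semigroup_add^'n^'m)"
  by (simp add: transpose_def vec_eq_iff)

lemma transpose_uminus: "transpose (- A) = - transpose (A :: 'a::group_add^'n^'m)"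
  by (simp add: transpose_def vec_eq_iff)

lemma matrix_vector_mult_uminus: "(- A) *v x = - (A *v (x :: 'a::ring_1^'n))"
  by (simp add: matrix_vector_mult_def vec_eq_iff sum_negf)

lemma quadratic_form_scaleR_add:
  fixes M1 M2 :: "real^'k::finite^'k"
  shows "w \<bullet> ((u *\<^sub>R M1 + v *\<^sub>R M2) *v w) = u * (w \<bullet> (M1 *v w)) + v * (w \<bullet> (M2 *v w))"
  by (simp add: matrix_vector_mult_add_rdistrib scaleR_matrix_vector_assoc[symmetric] inner_add_right)

lemma quadratic_form_add_transpose:
  fixes N :: "real^'k::finite^'k"
  shows "x \<bullet> ((N + transpose N) *v x) = 2 * (x \<bullet> (N *v x))"
  by (simp add: matrix_vector_mult_add_rdistrib inner_add_right inner_commute[of x]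
      dot_lmul_matrix[symmetric])

lemma pos_def_invertible:
  fixes P :: "real^'n::finite^'n"
  assumes "pos_def P"
  shows "invertible P"
proof -
  have "\<forall>x. P *v x = 0 \<longrightarrow> x = 0"
    using assms unfolding pos_def_def by (metis inner_zero_right less_irrefl)
  then show ?thesis
    by (simp add: invertible_left_inverse matrix_left_invertible_ker)
qed

lemma pos_def_matrix_inv:
  fixes P :: "real^'n::finite^'n"
  assumes P: "pos_def P"
  shows "pos_def (matrix_inv P)"
proof -
  let ?Q = "matrix_inv P"
  have PQ: "P ** ?Q = mat 1" and QP: "?Q ** P = mat 1"
    using matrix_inv_inverse pos_def_invertible[OF P] by blast+
  have sym_P: "transpose P = P" using P unfolding pos_def_def by blast
  have "transpose ?Q = ?Q"
    using matrix_inv_unique[of P "transpose ?Q"] PQ QP sym_P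
    by (metis matrix_transpose_mul transpose_mat)
  moreover have "w \<bullet> (?Q *v w) > 0" if "w \<noteq> 0" for w
  proof -
    have w: "w = P *v (?Q *v w)" by (simp add: matrix_vector_mul_assoc PQ)
    then have "?Q *v w \<noteq> 0" using that by auto
    then have "(?Q *v w) \<bullet> (P *v (?Q *v w)) > 0" using P unfolding pos_def_def by blast
    then show ?thesis by (subst (asm) w[symmetric]) (simp add: inner_commute)
  qed
  ultimately show ?thesis unfolding pos_def_def by blast
qed

lemma convex_pos_def: "convex {P :: real^'n::finite^'n. pos_def P}"
proof (rule convexI, clarsimp)
  fix P1 P2 :: "real^'n^'n" and u v :: real
  assume P1: "pos_def P1" and P2: "pos_def P2" and uv: "0 \<le> u" "0 \<le> v" "u + v = 1"
  have "x \<bullet> ((u *\<^sub>R P1 + v *\<^sub>R P2) *v x) > 0" if "x \<noteq> 0" for x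
  proof -
    have "x \<bullet> (P1 *v x) > 0" "x \<bullet> (P2 *v x) > 0"
      using P1 P2 that unfolding pos_def_def by blast+
    then have "u * (x \<bullet> (P1 *v x)) + v * (x \<bullet> (P2 *v x)) > 0"
      using uv by (smt (verit) mult_nonneg_nonneg mult_pos_pos)
    then show ?thesis
      by (simp only: quadratic_form_scaleR_add)
  qed
  then show "pos_def (u *\<^sub>R P1 + v *\<^sub>R P2)"
    using P1 P2 unfolding pos_def_def by (simp add: transpose_scalar transpose_add)
qed

text \<open>The flag \<open>strict\<close> selects between the conditions of \<open>L_s\<close> and \<open>L_ns\<close>, so that both
  regions are handled by one argument.\<close>

definition negative :: "bool \<Rightarrow> real \<Rightarrow> bool" where
  "negative strict r \<longleftrightarrow> (if strict then r < 0 else r \<le> 0)"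

lemma negative_mult_pos_iff: "c > 0 \<Longrightarrow> negative strict (c * r) \<longleftrightarrow> negative strict r"
  by (simp add: negative_def mult_less_0_iff mult_le_0_iff)

lemma convex_negative: "convex (Collect (negative strict))"
proof -
  have "Collect (negative strict) = (if strict then {..<0} else {..0})"
    by (auto simp: negative_def)
  then show ?thesis by simp
qed

lemma negative_convex_comb:
  assumes "negative strict a" "negative strict b" "0 \<le> u" "0 \<le> v" "u + v = 1"
  shows "negative strict (u * a + v * b)"
  using convexD[OF convex_negative, of a strict b u v] assms by simp

definition neg_form :: "bool \<Rightarrow> real^'k^'k \<Rightarrow> bool" where
  "neg_form strict M \<longleftrightarrow> transpose M = M \<and> (\<forall>x. x \<noteq> 0 \<longrightarrow> negative strict (x \<bullet> (M *v x)))"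

lemma neg_def_iff_neg_form: "neg_def M \<longleftrightarrow> neg_form True M"
  by (simp add: neg_def_def neg_form_def negative_def)

lemma neg_semidef_iff_neg_form: "neg_semidef M \<longleftrightarrow> neg_form False M"
  unfolding neg_semidef_def neg_form_def negative_def by (metis inner_zero_left order_refl)

lemma neg_form_add_transpose_iff:
  fixes N :: "real^'k::finite^'k"
  shows "neg_form strict (N + transpose N) \<longleftrightarrow> (\<forall>x. x \<noteq> 0 \<longrightarrow> negative strict (x \<bullet> (N *v x)))"
  by (simp add: neg_form_def transpose_add add.commute quadratic_form_add_transpose
      negative_mult_pos_iff)

definition block_vec :: "'a^'k \<Rightarrow> 'a^'l \<Rightarrow> 'a^('k + 'l)" where
  "block_vec u v = (\<chi> i. case i of Inl a \<Rightarrow> u $ a | Inr b \<Rightarrow> v $ b)"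

definition block_mat :: "'a^'k^'k \<Rightarrow> 'a^'l^'k \<Rightarrow> 'a^'k^'l \<Rightarrow> 'a^'l^'l \<Rightarrow> 'a^('k + 'l)^('k + 'l)" where
  "block_mat G H J E = (\<chi> i j. case i of
       Inl a \<Rightarrow> (case j of Inl b \<Rightarrow> G $ a $ b | Inr b \<Rightarrow> H $ a $ b)
     | Inr a \<Rightarrow> (case j of Inl b \<Rightarrow> J $ a $ b | Inr b \<Rightarrow> E $ a $ b))"

lemma block_vec_eq_0_iff [simp]: "block_vec u v = 0 \<longleftrightarrow> u = 0 \<and> v = 0"
  by (auto simp: block_vec_def vec_eq_iff split: sum.splits)

lemma all_block_vec:
  fixes P :: "'a^('k::finite + 'l::finite) \<Rightarrow> bool"
  shows "(\<forall>x. P x) \<longleftrightarrow> (\<forall>u v. P (block_vec u v))"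
proof -
  have "x = block_vec (\<chi> a. x $ Inl a) (\<chi> b. x $ Inr b)" for x :: "'a^('k + 'l)"
    by (simp add: block_vec_def vec_eq_iff split: sum.splits)
  then show ?thesis by metis
qed

lemma block_mat_add_transpose:
  "block_mat G H J E + transpose (block_mat G H J E)
     = block_mat (G + transpose G) (H + transpose J) (J + transpose H) (E + transpose E)"
  by (simp add: block_mat_def transpose_def vec_eq_iff split: sum.splits)

lemma quadratic_form_block_mat:
  fixes G :: "real^'k::finite^'k" and H :: "real^'l::finite^'k" and J :: "real^'k^'l"
    and E :: "real^'l^'l"
  shows "block_vec u v \<bullet> (block_mat G H J E *v block_vec u v)
    = u \<bullet> (G *v u) + u \<bullet> (H *v v) + v \<bullet> (J *v u) + v \<bullet> (E *v v)"
  by (simp add: block_vec_def block_mat_def inner_vec_def matrix_vector_mult_def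
      UNIV_Plus_UNIV[symmetric] sum.Plus sum.distrib distrib_left distrib_right
      del: UNIV_Plus_UNIV)

definition passivity_lmi ::
  "bool \<Rightarrow> real^'n^'n \<Rightarrow> real^'m^'n \<Rightarrow> real^'p^'n \<Rightarrow> real^'n^'p \<Rightarrow> real^'p^'p
    \<Rightarrow> real^'n^'m \<Rightarrow> real^'n^'n \<Rightarrow> bool" where
  "passivity_lmi strict A Bu Bd C D K P \<longleftrightarrow>
     (if D = 0 then neg_form strict (transpose (AK A Bu K) ** P + P ** AK A Bu K) \<and> transpose Bd ** P = C
      else neg_form strict (MK A Bu Bd C D K P))"

lemma L_s_iff_passivity_lmi: "L_s A Bu Bd C D K P \<longleftrightarrow> passivity_lmi True A Bu Bd C D K P"
  by (simp add: L_s_def passivity_lmi_def neg_def_iff_neg_form)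

lemma L_ns_iff_passivity_lmi: "L_ns A Bu Bd C D K P \<longleftrightarrow> passivity_lmi False A Bu Bd C D K P"
  by (simp add: L_ns_def passivity_lmi_def neg_semidef_iff_neg_form)

lemma lyapunov_eq_add_transpose:
  fixes P M :: "real^'n::finite^'n"
  assumes "transpose P = P"
  shows "transpose M ** P + P ** M = P ** M + transpose (P ** M)"
  by (simp add: matrix_transpose_mul assms add.commute)

lemma MK_eq_add_transpose:
  fixes A P :: "real^'n::finite^'n" and Bu :: "real^'m::finite^'n" and Bd :: "real^'p::finite^'n"
    and C :: "real^'n^'p" and D :: "real^'p^'p" and K :: "real^'n^'m"
  assumes sym_P: "transpose P = P"
  defines "N \<equiv> block_mat (P ** AK A Bu K) (P ** Bd) (- C) (- D)"
  shows "MK A Bu Bd C D K P = N + transpose N"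
proof -
  have "MK A Bu Bd C D K P = block_mat (transpose (AK A Bu K) ** P + P ** AK A Bu K)
      (P ** Bd - transpose C) (transpose Bd ** P - C) (- D - transpose D)"
    by (simp add: MK_def block_mat_def)
  moreover have "P ** Bd + transpose (- C) = P ** Bd - transpose C"
    and "- C + transpose (P ** Bd) = transpose Bd ** P - C"
    and "- D + transpose (- D) = - D - transpose D"
    by (simp_all add: transpose_uminus matrix_transpose_mul sym_P)
  ultimately show ?thesis
    unfolding N_def block_mat_add_transpose lyapunov_eq_add_transpose[OF sym_P] by simp
qed

definition dual_form ::
  "real^'n^'n \<Rightarrow> real^'m^'n \<Rightarrow> real^'p^'n \<Rightarrow> real^'n^'p \<Rightarrow> real^'p^'p
    \<Rightarrow> real^'n^'n \<Rightarrow> real^'n^'m \<Rightarrow> real^'n \<Rightarrow> real^'p \<Rightarrow> real" where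
  "dual_form A Bu Bd C D Q L w v =
     w \<bullet> ((A ** Q - Bu ** L) *v w) + w \<bullet> (Bd *v v) - v \<bullet> (C *v (Q *v w)) - v \<bullet> (D *v v)"

definition dual_lmi ::
  "bool \<Rightarrow> real^'n^'n \<Rightarrow> real^'m^'n \<Rightarrow> real^'p^'n \<Rightarrow> real^'n^'p \<Rightarrow> real^'p^'p
    \<Rightarrow> real^'n^'n \<Rightarrow> real^'n^'m \<Rightarrow> bool" where
  "dual_lmi strict A Bu Bd C D Q L \<longleftrightarrow>
     (if D = 0 then (\<forall>w. w \<noteq> 0 \<longrightarrow> negative strict (w \<bullet> ((A ** Q - Bu ** L) *v w)))
                    \<and> transpose Bd = C ** Q
      else (\<forall>w v. w \<noteq> 0 \<or> v \<noteq> 0 \<longrightarrow> negative strict (dual_form A Bu Bd C D Q L w v)))"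

lemma lyapunov_form_congruence:
  fixes P Q :: "real^'n::finite^'n"
  assumes PQ: "P ** Q = mat 1" and sym_P: "transpose P = P" and L: "L = K ** Q"
  shows "(Q *v w) \<bullet> ((P ** AK A Bu K) *v (Q *v w)) = w \<bullet> ((A ** Q - Bu ** L) *v w)"
proof -
  have "(Q *v w) \<bullet> ((P ** AK A Bu K) *v (Q *v w)) = (P *v (Q *v w)) \<bullet> (AK A Bu K *v (Q *v w))"
    by (metis dot_lmul_matrix matrix_vector_mul_assoc sym_P transpose_matrix_vector)
  also have "\<dots> = w \<bullet> (AK A Bu K *v (Q *v w))"
    by (simp add: matrix_vector_mul_assoc PQ)
  also have "\<dots> = w \<bullet> ((A ** Q - Bu ** L) *v w)"
    by (simp add: AK_def L matrix_vector_mult_diff_rdistrib matrix_vector_mul_assoc[symmetric])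
  finally show ?thesis .
qed

lemma block_form_congruence:
  fixes A P Q :: "real^'n::finite^'n" and Bu :: "real^'m::finite^'n" and Bd :: "real^'p::finite^'n"
    and C :: "real^'n^'p" and D :: "real^'p^'p" and K :: "real^'n^'m"
  assumes PQ: "P ** Q = mat 1" and sym_P: "transpose P = P" and L: "L = K ** Q"
  defines "N \<equiv> block_mat (P ** AK A Bu K) (P ** Bd) (- C) (- D)"
  shows "block_vec (Q *v w) v \<bullet> (N *v block_vec (Q *v w) v) = dual_form A Bu Bd C D Q L w v"
proof -
  have "(Q *v w) \<bullet> ((P ** Bd) *v v) = w \<bullet> (Bd *v v)"
    by (metis PQ dot_lmul_matrix matrix_vector_mul_assoc matrix_vector_mul_lid sym_P
        transpose_matrix_vector)
  then show ?thesis
    unfolding N_def quadratic_form_block_mat lyapunov_form_congruence[OF PQ sym_P L]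
    by (simp add: dual_form_def matrix_vector_mult_uminus inner_minus_right)
qed

lemma passivity_lmi_iff_dual_lmi:
  fixes A P Q :: "real^'n::finite^'n" and Bu :: "real^'m::finite^'n" and Bd :: "real^'p::finite^'n"
    and C :: "real^'n^'p" and D :: "real^'p^'p" and K :: "real^'n^'m"
  assumes PQ: "P ** Q = mat 1" and QP: "Q ** P = mat 1" and sym_P: "transpose P = P"
    and L: "L = K ** Q"
  shows "passivity_lmi strict A Bu Bd C D K P \<longleftrightarrow> dual_lmi strict A Bu Bd C D Q L"
proof -
  have PQw: "P *v (Q *v w) = w" for w by (simp add: matrix_vector_mul_assoc PQ)
  have QPu: "Q *v (P *v u) = u" for u by (simp add: matrix_vector_mul_assoc QP)
  have all_Q: "(\<forall>u. F u) \<longleftrightarrow> (\<forall>w. F (Q *v w))" for F by (metis QPu)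
  have Q_eq_0_iff: "Q *v w = 0 \<longleftrightarrow> w = 0" for w by (metis PQw matrix_vector_mult_0_right)
  have lyapunov: "neg_form strict (transpose (AK A Bu K) ** P + P ** AK A Bu K) \<longleftrightarrow>
      (\<forall>w. w \<noteq> 0 \<longrightarrow> negative strict (w \<bullet> ((A ** Q - Bu ** L) *v w)))"
    unfolding lyapunov_eq_add_transpose[OF sym_P] neg_form_add_transpose_iff
    by (subst all_Q) (simp add: Q_eq_0_iff lyapunov_form_congruence[OF PQ sym_P L])
  have coupling: "transpose Bd ** P = C \<longleftrightarrow> transpose Bd = C ** Q"
    by (metis PQ QP matrix_mul_assoc matrix_mul_rid)
  have block: "neg_form strict (MK A Bu Bd C D K P) \<longleftrightarrow>
      (\<forall>w v. w \<noteq> 0 \<or> v \<noteq> 0 \<longrightarrow> negative strict (dual_form A Bu Bd C D Q L w v))"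
    unfolding MK_eq_add_transpose[OF sym_P] neg_form_add_transpose_iff all_block_vec
    by (subst all_Q) (simp add: Q_eq_0_iff block_form_congruence[OF PQ sym_P L])
  show ?thesis
    unfolding passivity_lmi_def dual_lmi_def using lyapunov coupling block by simp
qed

lemma feedback_region_eq_image:
  fixes A :: "real^'n::finite^'n" and Bu :: "real^'m::finite^'n" and Bd :: "real^'p::finite^'n"
    and C :: "real^'n^'p" and D :: "real^'p^'p"
  shows "{K. \<exists>P. pos_def P \<and> passivity_lmi strict A Bu Bd C D K P}
    = (\<lambda>(Q, L). L ** matrix_inv Q) ` {(Q, L). pos_def Q \<and> dual_lmi strict A Bu Bd C D Q L}"
    (is "?primal = ?f ` ?dual")
proof
  show "?primal \<subseteq> ?f ` ?dual"
  proof
    fix K assume "K \<in> ?primal"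
    then obtain P where P: "pos_def P" and lmi: "passivity_lmi strict A Bu Bd C D K P" by blast
    let ?Q = "matrix_inv P"
    have inv_P: "invertible P" using pos_def_invertible[OF P] .
    have "dual_lmi strict A Bu Bd C D ?Q (K ** ?Q)"
      using passivity_lmi_iff_dual_lmi[OF matrix_inv_inverse[OF inv_P]] P lmi
      unfolding pos_def_def by blast
    moreover have "K = ?f (?Q, K ** ?Q)"
      by (simp add: matrix_inv_matrix_inv inv_P matrix_mul_assoc[symmetric] matrix_inv_inverse)
    ultimately show "K \<in> ?f ` ?dual"
      using pos_def_matrix_inv[OF P] by blast
  qed
next
  show "?f ` ?dual \<subseteq> ?primal"
  proof
    fix K assume "K \<in> ?f ` ?dual"
    then obtain Q L where Q: "pos_def Q" and lmi: "dual_lmi strict A Bu Bd C D Q L"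
      and K: "K = L ** matrix_inv Q" by auto
    let ?P = "matrix_inv Q"
    have inv_Q: "invertible Q" using pos_def_invertible[OF Q] .
    have sym_P: "transpose ?P = ?P"
      using pos_def_matrix_inv[OF Q] unfolding pos_def_def by blast
    have "L = (L ** ?P) ** Q"
      by (simp add: matrix_mul_assoc[symmetric] matrix_inv_inverse inv_Q)
    then have "passivity_lmi strict A Bu Bd C D (L ** ?P) ?P"
      using passivity_lmi_iff_dual_lmi[OF matrix_inv_inverse(2,1)[OF inv_Q] sym_P] lmi by blast
    then show "K \<in> ?primal"
      using pos_def_matrix_inv[OF Q] K by blast
  qed
qed

lemma dual_matrix_scaleR_add:
  fixes A Q1 Q2 :: "real^'n::finite^'n" and Bu :: "real^'m::finite^'n"
  shows "A ** (u *\<^sub>R Q1 + v *\<^sub>R Q2) - Bu ** (u *\<^sub>R L1 + v *\<^sub>R L2)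
    = u *\<^sub>R (A ** Q1 - Bu ** L1) + v *\<^sub>R (A ** Q2 - Bu ** L2)"
  by (simp add: matrix_add_ldistrib matrix_scalar_ac scalar_matrix_assoc[symmetric] algebra_simps)

lemma dual_form_convex_comb:
  fixes A Q1 Q2 :: "real^'n::finite^'n" and Bu :: "real^'m::finite^'n" and Bd :: "real^'p::finite^'n"
    and C :: "real^'n^'p" and D :: "real^'p^'p"
  assumes "u + v = 1"
  shows "dual_form A Bu Bd C D (u *\<^sub>R Q1 + v *\<^sub>R Q2) (u *\<^sub>R L1 + v *\<^sub>R L2) w x
    = u * dual_form A Bu Bd C D Q1 L1 w x + v * dual_form A Bu Bd C D Q2 L2 w x"
proof -
  have split: "t = u * t + v * t" for t :: real
    using assms by (metis distrib_right mult_1)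
  show ?thesis
    unfolding dual_form_def dual_matrix_scaleR_add quadratic_form_scaleR_add
    by (subst split[of "w \<bullet> (Bd *v x)"], subst split[of "x \<bullet> (D *v x)"])
      (simp add: matrix_vector_mult_add_rdistrib scaleR_matrix_vector_assoc[symmetric]
        inner_add_right algebra_simps)
qed

lemma convex_dual_region:
  fixes A :: "real^'n::finite^'n" and Bu :: "real^'m::finite^'n" and Bd :: "real^'p::finite^'n"
    and C :: "real^'n^'p" and D :: "real^'p^'p"
  shows "convex {(Q, L). pos_def Q \<and> dual_lmi strict A Bu Bd C D Q L}"
proof (rule convexI, clarsimp)
  fix Q1 Q2 :: "real^'n^'n" and L1 L2 :: "real^'n^'m" and u v :: real
  assume Q1: "pos_def Q1" and lmi1: "dual_lmi strict A Bu Bd C D Q1 L1"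
    and Q2: "pos_def Q2" and lmi2: "dual_lmi strict A Bu Bd C D Q2 L2"
    and uv: "0 \<le> u" "0 \<le> v" "u + v = 1"
  have "pos_def (u *\<^sub>R Q1 + v *\<^sub>R Q2)"
    using convexD[OF convex_pos_def] Q1 Q2 uv by blast
  moreover have "dual_lmi strict A Bu Bd C D (u *\<^sub>R Q1 + v *\<^sub>R Q2) (u *\<^sub>R L1 + v *\<^sub>R L2)"
  proof (cases "D = 0")
    case True
    have "C ** (u *\<^sub>R Q1 + v *\<^sub>R Q2) = (u + v) *\<^sub>R transpose Bd"
      using lmi1 lmi2 True
      by (simp add: dual_lmi_def matrix_add_ldistrib matrix_scalar_ac scalar_matrix_assoc[symmetric]
          scaleR_add_left)
    then show ?thesis
      using lmi1 lmi2 True uv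
      by (auto simp: dual_lmi_def dual_matrix_scaleR_add quadratic_form_scaleR_add
          intro!: negative_convex_comb)
  next
    case False
    then show ?thesis
      using lmi1 lmi2 uv
      by (auto simp: dual_lmi_def dual_form_convex_comb intro!: negative_convex_comb)
  qed
  ultimately show "pos_def (u *\<^sub>R Q1 + v *\<^sub>R Q2)
      \<and> dual_lmi strict A Bu Bd C D (u *\<^sub>R Q1 + v *\<^sub>R Q2) (u *\<^sub>R L1 + v *\<^sub>R L2)" ..
qed

lemma path_connected_feedback_region:
  fixes A :: "real^'n::finite^'n" and Bu :: "real^'m::finite^'n" and Bd :: "real^'p::finite^'n"
    and C :: "real^'n^'p" and D :: "real^'p^'p"
  shows "path_connected {K. \<exists>P. pos_def P \<and> passivity_lmi strict A Bu Bd C D K P}"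
  unfolding feedback_region_eq_image
proof (rule path_connected_continuous_image)
  show "continuous_on {(Q, L). pos_def Q \<and> dual_lmi strict A Bu Bd C D Q L}
      (\<lambda>(Q, L). L ** matrix_inv Q)"
    unfolding case_prod_unfold
    by (auto intro!: continuous_intros pos_def_invertible)
  show "path_connected {(Q, L). pos_def Q \<and> dual_lmi strict A Bu Bd C D Q L}"
    by (rule convex_imp_path_connected[OF convex_dual_region])
qed

theorem lemma4:
  fixes A :: "real^'n::finite^'n" and Bu :: "real^'m::finite^'n" and Bd :: "real^'p::finite^'n"
    and C :: "real^'n^'p" and D :: "real^'p^'p"
  shows "path_connected (passivity_region A Bu Bd C D)
       \<and> path_connected (strict_passivity_region A Bu Bd C D)"
  unfolding passivity_region_def strict_passivity_region_def
    L_ns_iff_passivity_lmi L_s_iff_passivity_lmi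
  using path_connected_feedback_region by blast

end
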